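(* Let $O$ be a set of Boolean functions, $\textsc{prop}$ a finite set of propositional variables, and $p$ a propositional variable. Then $\mathrm{PL}_O[\textsc{prop}]\leq_{pc}\mathrm{ML}_{O\cup\{\Diamond\}}[\{p\}]$ and $\mathrm{PL}_O[\textsc{prop}]\leq_{pc}\mathrm{ML}_{O\cup\{\Box\}}[\{p\}]$.
   Context: $\mathrm{PL}_O[\textsc{prop}]$ is the set of propositional formulas $\phi::=x\mid f(\phi_1,\dots,\phi_n)$ with $x\in\textsc{prop}$ and $f\in O$, viewed as a concept class with examples the truth assignments $V:\textsc{prop}\to\{0,1\}$ and $\lambda(\phi)$ the set of satisfying assignments. $\mathrm{ML}_{O\cup\{\Diamond\}}[\{p\}]$ is the set of modal formulas $\phi::=p\mid f(\phi_1,\dots,\phi_n)\mid\Diamond\phi$ with $f\in O$ (Boolean functions interpreted pointwise), and similarly with $\Box$; it is viewed as a concept class whose examples are pointed finite Kripke models $(M,w)$ and $\lambda(\phi)=\{(M,w)\mid M,w\models\phi\}$. For concept classes $\mathcal{C}_i=(C_i,E_i,\lambda_i)$, $\mathcal{C}_1\leq_{pc}\mathcal{C}_2$ means there are $f:C_1\to C_2$ and $h:E_1\to E_2$ such that (i) for all $c\in C_1,e\in E_1$: $e\in\lambda_1(c)$ iff $h(e)\in\lambda_2(f(c))$; and (ii) for each $e\in E_2$, either $e\in\lambda_2(f(c))$ for all $c\in C_1$, or for no $c\in C_1$, or there is $e'\in E_1$ with $\{c\mid e\in\lambda_2(f(c))\}=\{c\mid e'\in\lambda_1(c)\}$. *)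

theory Defs
  imports Main
begin

text \<open>A concept class is given by a set of concepts C, a set of examples E and a
  labelling lam, where lam c e means e \<in> \<lambda>(c).\<close>

definition pc_reducible ::
  "'c1 set \<Rightarrow> 'e1 set \<Rightarrow> ('c1 \<Rightarrow> 'e1 \<Rightarrow> bool) \<Rightarrow>
   'c2 set \<Rightarrow> 'e2 set \<Rightarrow> ('c2 \<Rightarrow> 'e2 \<Rightarrow> bool) \<Rightarrow> bool" where
  "pc_reducible C1 E1 lam1 C2 E2 lam2 \<longleftrightarrow>
     (\<exists>f h. (\<forall>c\<in>C1. f c \<in> C2) \<and> (\<forall>e\<in>E1. h e \<in> E2) \<and>
       (\<forall>c\<in>C1. \<forall>e\<in>E1. lam1 c e \<longleftrightarrow> lam2 (f c) (h e)) \<and>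
       (\<forall>e\<in>E2. (\<forall>c\<in>C1. lam2 (f c) e) \<or> (\<forall>c\<in>C1. \<not> lam2 (f c) e) \<or>
                (\<exists>e'\<in>E1. \<forall>c\<in>C1. lam2 (f c) e \<longleftrightarrow> lam1 c e')))"

text \<open>A Boolean function of arity n is a pair (n, g) where g maps argument
  lists (of length n) to a truth value.\<close>

type_synonym bfun = "nat \<times> (bool list \<Rightarrow> bool)"

datatype 'v pl = PVar 'v | PApp bfun "'v pl list"

fun pl_wf :: "bfun set \<Rightarrow> 'v set \<Rightarrow> 'v pl \<Rightarrow> bool" where
  "pl_wf Ops P (PVar x) \<longleftrightarrow> x \<in> P"
| "pl_wf Ops P (PApp f args) \<longleftrightarrow> f \<in> Ops \<and> length args = fst f \<and> (\<forall>a\<in>set args. pl_wf Ops P a)"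

fun pl_sat :: "('v \<Rightarrow> bool) \<Rightarrow> 'v pl \<Rightarrow> bool" where
  "pl_sat V (PVar x) = V x"
| "pl_sat V (PApp f args) = snd f (map (pl_sat V) args)"

definition PL_concepts :: "bfun set \<Rightarrow> 'v set \<Rightarrow> 'v pl set" where
  "PL_concepts Ops P = {\<phi>. pl_wf Ops P \<phi>}"

text \<open>Truth assignments V : prop \<rightarrow> {0,1} (extensional: False outside prop).\<close>
definition PL_examples :: "'v set \<Rightarrow> ('v \<Rightarrow> bool) set" where
  "PL_examples P = {V. \<forall>x. x \<notin> P \<longrightarrow> V x = False}"

datatype 'v ml = MVar 'v | MApp bfun "'v ml list" | MDia "'v ml" | MBox "'v ml"

text \<open>ML over operators Ops plus diamond (dia = True) or box (dia = False),
  with propositional variables from P.\<close>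
fun ml_wf :: "bfun set \<Rightarrow> bool \<Rightarrow> 'v set \<Rightarrow> 'v ml \<Rightarrow> bool" where
  "ml_wf Ops d P (MVar x) \<longleftrightarrow> x \<in> P"
| "ml_wf Ops d P (MApp f args) \<longleftrightarrow> f \<in> Ops \<and> length args = fst f \<and> (\<forall>a\<in>set args. ml_wf Ops d P a)"
| "ml_wf Ops d P (MDia \<phi>) \<longleftrightarrow> d \<and> ml_wf Ops d P \<phi>"
| "ml_wf Ops d P (MBox \<phi>) \<longleftrightarrow> \<not> d \<and> ml_wf Ops d P \<phi>"

type_synonym 'v pkripke = "nat set \<times> (nat \<times> nat) set \<times> ('v \<Rightarrow> nat set) \<times> nat"

fun ml_sat :: "(nat \<times> nat) set \<Rightarrow> ('v \<Rightarrow> nat set) \<Rightarrow> nat \<Rightarrow> 'v ml \<Rightarrow> bool" where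
  "ml_sat R Val w (MVar x) \<longleftrightarrow> w \<in> Val x"
| "ml_sat R Val w (MApp f args) = snd f (map (ml_sat R Val w) args)"
| "ml_sat R Val w (MDia \<phi>) \<longleftrightarrow> (\<exists>v. (w, v) \<in> R \<and> ml_sat R Val v \<phi>)"
| "ml_sat R Val w (MBox \<phi>) \<longleftrightarrow> (\<forall>v. (w, v) \<in> R \<longrightarrow> ml_sat R Val v \<phi>)"

definition Modal_concepts :: "bfun set \<Rightarrow> bool \<Rightarrow> 'v set \<Rightarrow> 'v ml set" where
  "Modal_concepts Ops d P = {\<phi>. ml_wf Ops d P \<phi>}"

definition Modal_examples :: "'v set \<Rightarrow> 'v pkripke set" where
  "Modal_examples P = {(W, R, Val, w). finite W \<and> W \<noteq> {} \<and> R \<subseteq> W \<times> W \<and> w \<in> W \<and>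
      (\<forall>x. Val x \<subseteq> W) \<and> (\<forall>x. x \<notin> P \<longrightarrow> Val x = {})}"

definition Modal_label :: "'v ml \<Rightarrow> 'v pkripke \<Rightarrow> bool" where
  "Modal_label \<phi> M = (case M of (W, R, Val, w) \<Rightarrow> ml_sat R Val w \<phi>)"

end

theory Submission
  imports Defs
begin

text \<open>Enumerate the variables as x_0, ..., x_(n-1) and translate x_i into
  \<Diamond>^(i+1) p (resp. \<Box>^(i+1) p), keeping the Boolean connectives. An assignment V
  becomes the chain 0 \<rightarrow> 1 \<rightarrow> ... \<rightarrow> n, rooted at 0, with p true at i + 1 iff V x_i; on such
  a chain \<Diamond>^(i+1) p and \<Box>^(i+1) p both hold at the root iff V x_i, so labels are
  preserved. Conversely, at any pointed model the translated formulas behave exactly like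
  their sources under the assignment x_i \<mapsto> truth of \<Diamond>^(i+1) p there, so every modal
  example is simulated by a propositional one.\<close>

lemma pc_reducibleI:
  assumes "f ` C1 \<subseteq> C2" and "h ` E1 \<subseteq> E2"
    and "\<And>c e. c \<in> C1 \<Longrightarrow> e \<in> E1 \<Longrightarrow> lam1 c e \<longleftrightarrow> lam2 (f c) (h e)"
    and "\<And>e. e \<in> E2 \<Longrightarrow> \<exists>e'\<in>E1. \<forall>c\<in>C1. lam2 (f c) e \<longleftrightarrow> lam1 c e'"
  shows "pc_reducible C1 E1 lam1 C2 E2 lam2"
  unfolding pc_reducible_def using assms by blast

lemma pl_sat_cong:
  assumes "pl_wf Ops P \<phi>" and "\<And>x. x \<in> P \<Longrightarrow> V x = V' x"
  shows "pl_sat V \<phi> = pl_sat V' \<phi>"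
  using assms
proof (induction \<phi>)
  case (PApp f args)
  then show ?case
    by (simp cong: map_cong)
qed simp

definition modality :: "bool \<Rightarrow> 'v ml \<Rightarrow> 'v ml" where
  "modality d = (if d then MDia else MBox)"

fun pl_to_ml :: "('v \<Rightarrow> nat) \<Rightarrow> bool \<Rightarrow> 'v \<Rightarrow> 'v pl \<Rightarrow> 'v ml" where
  "pl_to_ml g d p (PVar x) = (modality d ^^ Suc (g x)) (MVar p)"
| "pl_to_ml g d p (PApp f args) = MApp f (map (pl_to_ml g d p) args)"

lemma ml_wf_modality_power: "ml_wf Ops d {p} ((modality d ^^ k) (MVar p))"
  by (induction k) (auto simp: modality_def)

lemma ml_wf_pl_to_ml: "pl_wf Ops P \<phi> \<Longrightarrow> ml_wf Ops d {p} (pl_to_ml g d p \<phi>)"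
  by (induction \<phi>) (auto simp: ml_wf_modality_power simp del: funpow.simps)

lemma ml_sat_pl_to_ml:
  "ml_sat R Val w (pl_to_ml g d p \<phi>)
     = pl_sat (\<lambda>x. ml_sat R Val w ((modality d ^^ Suc (g x)) (MVar p))) \<phi>"
proof (induction \<phi>)
  case (PApp f args)
  then show ?case
    by (simp del: funpow.simps cong: map_cong)
qed (simp del: funpow.simps)

definition chainR :: "nat \<Rightarrow> (nat \<times> nat) set" where
  "chainR n = {(i, Suc i) | i. i < n}"

definition chain_model :: "nat \<Rightarrow> nat set \<Rightarrow> 'v \<Rightarrow> 'v pkripke" where
  "chain_model n S p = ({..n}, chainR n, \<lambda>y. if y = p then S else {}, 0)"

lemma chain_model_in_Modal_examples:
  "S \<subseteq> {..n} \<Longrightarrow> chain_model n S p \<in> Modal_examples {p}"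
  by (auto simp: chain_model_def Modal_examples_def chainR_def)

text \<open>Below the end of the chain every world has exactly one successor, so \<Diamond> and \<Box>
  agree there.\<close>
lemma ml_sat_modality_power_chainR:
  "j + k \<le> n \<Longrightarrow> ml_sat (chainR n) Val j ((modality d ^^ k) (MVar p)) = (j + k \<in> Val p)"
proof (induction k arbitrary: j)
  case (Suc k)
  then have "(j, v) \<in> chainR n \<longleftrightarrow> v = Suc j" for v
    by (auto simp: chainR_def)
  with Suc show ?case
    by (cases d) (auto simp: modality_def)
qed simp

lemma Modal_label_pl_to_ml_chain_model:
  assumes "pl_wf Ops P \<phi>" and "\<And>x. x \<in> P \<Longrightarrow> g x < n"
  shows "Modal_label (pl_to_ml g d p \<phi>) (chain_model n S p) = pl_sat (\<lambda>x. Suc (g x) \<in> S) \<phi>"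
proof -
  have "ml_sat (chainR n) (\<lambda>y. if y = p then S else {}) 0 ((modality d ^^ Suc (g x)) (MVar p))
          = (Suc (g x) \<in> S)" if "x \<in> P" for x
    using ml_sat_modality_power_chainR[of 0 "Suc (g x)" n "\<lambda>y. if y = p then S else {}"]
      assms(2)[OF that]
    by (simp del: funpow.simps)
  then show ?thesis
    unfolding Modal_label_def chain_model_def
    by (simp only: prod.case ml_sat_pl_to_ml) (rule pl_sat_cong[OF assms(1)])
qed

lemma pc_reducible_PL_ML:
  fixes Ops :: "bfun set" and P :: "'v set" and p :: 'v
  assumes "finite P"
  shows "pc_reducible (PL_concepts Ops P) (PL_examples P) (\<lambda>\<phi> V. pl_sat V \<phi>)
           (Modal_concepts Ops d {p}) (Modal_examples {p}) Modal_label"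
proof -
  obtain g :: "'v \<Rightarrow> nat" and n where g_range: "g ` P = {..<n}" and g_inj: "inj_on g P"
    using finite_imp_inj_to_nat_seg[OF assms] by (auto simp: lessThan_def)
  define h where "h V = chain_model n (Suc ` g ` {x \<in> P. V x}) p" for V :: "'v \<Rightarrow> bool"
  have g_less: "g x < n" if "x \<in> P" for x
    using g_range that by blast
  show ?thesis
  proof (rule pc_reducibleI)
    show "pl_to_ml g d p ` PL_concepts Ops P \<subseteq> Modal_concepts Ops d {p}"
      by (auto simp: PL_concepts_def Modal_concepts_def ml_wf_pl_to_ml)
    show "h ` PL_examples P \<subseteq> Modal_examples {p}"
      using g_less by (auto simp: h_def Suc_le_eq intro!: chain_model_in_Modal_examples)
  next
    fix \<phi> V assume "\<phi> \<in> PL_concepts Ops P"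
    then have wf: "pl_wf Ops P \<phi>" by (simp add: PL_concepts_def)
    have "V x = (Suc (g x) \<in> Suc ` g ` {x \<in> P. V x})" if "x \<in> P" for x
      using g_inj that by (auto simp: inj_on_def)
    then have "pl_sat V \<phi> = pl_sat (\<lambda>x. Suc (g x) \<in> Suc ` g ` {x \<in> P. V x}) \<phi>"
      by (rule pl_sat_cong[OF wf])
    also have "\<dots> = Modal_label (pl_to_ml g d p \<phi>) (h V)"
      unfolding h_def by (rule Modal_label_pl_to_ml_chain_model[OF wf g_less, symmetric])
    finally show "pl_sat V \<phi> \<longleftrightarrow> Modal_label (pl_to_ml g d p \<phi>) (h V)" .
  next
    fix M :: "'v pkripke"
    obtain W R Val w where M: "M = (W, R, Val, w)" by (cases M) auto
    define V where "V x = (x \<in> P \<and> ml_sat R Val w ((modality d ^^ Suc (g x)) (MVar p)))" for x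
    have "pl_sat V \<phi> \<longleftrightarrow> Modal_label (pl_to_ml g d p \<phi>) M" if "\<phi> \<in> PL_concepts Ops P" for \<phi>
      using that unfolding M Modal_label_def PL_concepts_def
      by (simp only: prod.case ml_sat_pl_to_ml mem_Collect_eq)
        (rule pl_sat_cong, auto simp: V_def)
    moreover have "V \<in> PL_examples P"
      by (simp add: V_def PL_examples_def)
    ultimately show "\<exists>V'\<in>PL_examples P. \<forall>\<phi>\<in>PL_concepts Ops P.
                       Modal_label (pl_to_ml g d p \<phi>) M \<longleftrightarrow> pl_sat V' \<phi>"
      by blast
  qed
qed

theorem lemmaB4:
  fixes Ops :: "bfun set" and P :: "'v set" and p :: 'v
  assumes "finite P"
  shows "pc_reducible (PL_concepts Ops P) (PL_examples P) (\<lambda>\<phi> V. pl_sat V \<phi>)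
           (Modal_concepts Ops True {p}) (Modal_examples {p}) Modal_label
       \<and> pc_reducible (PL_concepts Ops P) (PL_examples P) (\<lambda>\<phi> V. pl_sat V \<phi>)
           (Modal_concepts Ops False {p}) (Modal_examples {p}) Modal_label"
  using pc_reducible_PL_ML[OF assms] by blast

end
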